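(* Let $\mathcal{F}=\langle\mathbb{A},(\mu_i)_{i\in\mathsf{Ag}}\rangle$ be an APE-structure and $\mathbb{E}=(E,(\sim_i),(P_i),\Phi,\mathsf{pre})$ a probabilistic event structure over $\mathbb{A}$. Then for every $a\in\Phi$ and every $i\in\mathsf{Ag}$, the partial map $\mu^a_i$ is an $i$-premeasure on $\mathbb{A}$. Furthermore, if $a\leq y$ then $\mu^a_i(x)=\mu^a_i(x\wedge y)$ (for $x$ in the domain of $\mu^a_i$).
   Context: Fix a set $\mathsf{Ag}$ of agents. A monadic Heyting algebra is a Heyting algebra $\mathbb{L}$ with, for each $i\in\mathsf{Ag}$, monotone unary operations $\lozenge_i,\Box_i$ such that for all $a,b$: $a\leq\lozenge_i a$; $\Box_i a\leq a$; $\lozenge_i(a\vee b)\leq\lozenge_i a\vee\lozenge_i b$; $\Box_i(a\to b)\leq\Box_i a\to\Box_i b$; $\lozenge_i a\leq\Box_i\lozenge_i a$; $\lozenge_i\Box_i a\leq\Box_i a$; $\Box_i(a\to b)\leq\lozenge_i a\to\lozenge_i b$; $\lozenge_i\bot\leq\bot$; $\top\leq\Box_i\top$. An epistemic Heyting algebra is a finite monadic Heyting algebra with $\lozenge_i a\vee\neg\lozenge_i a=\top$ for all $i,a$. An element $a$ is $i$-minimal if $a\neq\bot$, $\lozenge_i a=a$, and whenever $b<a$ and $\lozenge_i b=b$ then $b=\bot$; $\mathsf{Min}_i(\mathbb{A})$ is the set of $i$-minimal elements and $\mathsf{Min}_i(\mathbb{A}){\downarrow}$ its down-set. A partial map $\mu:\mathbb{A}\to\mathbb{R}^+$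 is an $i$-premeasure if: (1) $\mathsf{dom}(\mu)=\mathsf{Min}_i(\mathbb{A}){\downarrow}$; (2) $\mu$ is order-preserving; (3) for every $a\in\mathsf{Min}_i(\mathbb{A})$ and all $b,c\leq a$, $\mu(b\vee c)=\mu(b)+\mu(c)-\mu(b\wedge c)$; (4) $\mu(\bot)=0$ if $\mathsf{dom}(\mu)\neq\varnothing$. It is an $i$-measure if moreover (5) for every $a\in\mathsf{Min}_i(\mathbb{A})$ and all $b,c\leq a$ with $b<c$, $\mu(b)<\mu(c)$; and (6) $\mu(a)=1$ for every $a\in\mathsf{Min}_i(\mathbb{A})$. An APE-structure is a pair $\langle\mathbb{A},(\mu_i)_{i\in\mathsf{Ag}}\rangle$ with $\mathbb{A}$ an epistemic Heyting algebra and each $\mu_i$ an $i$-measure on $\mathbb{A}$. A pre-ordered multiset on a set $X$ is a multiset of elements of $X$ in which the copies $x_1,\dots,x_n$ of any element carry the linear order $x_1\prec\cdots\prec x_n$. A probabilistic event structure over $\mathbb{A}$ is a tuple $(E,(\sim_i),(P_i),\Phi,\mathsf{pre})$: $E$ non-empty finite; each $\sim_i$ an equivalence relation on $E$; each $P_i:E\to\,]0,1]$ with $\sum\{P_i(e')\mid e'\sim_i e\}=1$; $\Phi$ a finite pre-ordered multiset on $\mathbb{A}$ such that any $a,b\in\Phi$ arising from distinct elements satisfy $a\wedge b=\bot$ or $a<b$ or $b<a$; $\mathsf{pre}(\bullet\mid a)$ a probability distribution on $E$ for each $a\in\Phi$; and if $\mathsf{pre}(e\mid a)=0$ then $\mathsf{pre}(e\mid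 b)=0$ for all $b\in\Phi$ with $a<b$ (distinct elements) or $a\prec b$ (copies). For $a\in\Phi$, $\mathrm{mb}(a)$ denotes the set of maximal elements of $\Phi\cap({\downarrow}a\setminus\{a\})$, and $\mu^a_i:\mathbb{A}\to\mathbb{R}^+$ is the partial function $\mu^a_i(x):=\mu_i(x\wedge a)-\sum_{b\in\mathrm{mb}(a)}\mu_i(x\wedge b)$, defined for $x\in\mathsf{Min}_i(\mathbb{A}){\downarrow}$. *)

theory Defs
  imports Complex_Main "HOL-Library.Multiset"
begin

text \<open>The Heyting algebra is the whole (finite) type 'a, a bounded lattice with an
  implication imp satisfying residuation. Agents are the elements of type 'i.\<close>

definition heyting :: "('a::bounded_lattice \<Rightarrow> 'a \<Rightarrow> 'a) \<Rightarrow> bool" where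
  "heyting imp \<longleftrightarrow> (\<forall>a b c. c \<le> imp a b \<longleftrightarrow> inf c a \<le> b)"

definition monadic_HA ::
  "('a::bounded_lattice \<Rightarrow> 'a \<Rightarrow> 'a) \<Rightarrow> ('i \<Rightarrow> 'a \<Rightarrow> 'a) \<Rightarrow> ('i \<Rightarrow> 'a \<Rightarrow> 'a) \<Rightarrow> bool" where
  "monadic_HA imp dia box \<longleftrightarrow> heyting imp \<and>
     (\<forall>i. mono (dia i) \<and> mono (box i) \<and>
        (\<forall>a b. a \<le> dia i a \<and> box i a \<le> a
           \<and> dia i (sup a b) \<le> sup (dia i a) (dia i b)
           \<and> box i (imp a b) \<le> imp (box i a) (box i b)
           \<and> dia i a \<le> box i (dia i a)
           \<and> dia i (box i a) \<le> box i a
           \<and> box i (imp a b) \<le> imp (dia i a) (dia i b))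
        \<and> dia i bot \<le> bot \<and> top \<le> box i top)"

definition epistemic_HA ::
  "('a::{finite,bounded_lattice} \<Rightarrow> 'a \<Rightarrow> 'a) \<Rightarrow> ('i \<Rightarrow> 'a \<Rightarrow> 'a) \<Rightarrow> ('i \<Rightarrow> 'a \<Rightarrow> 'a) \<Rightarrow> bool" where
  "epistemic_HA imp dia box \<longleftrightarrow> monadic_HA imp dia box \<and>
     (\<forall>i a. sup (dia i a) (imp (dia i a) bot) = top)"

definition i_minimal :: "('i \<Rightarrow> 'a::bounded_lattice \<Rightarrow> 'a) \<Rightarrow> 'i \<Rightarrow> 'a \<Rightarrow> bool" where
  "i_minimal dia i a \<longleftrightarrow> a \<noteq> bot \<and> dia i a = a \<and>
     (\<forall>b. b < a \<and> dia i b = b \<longrightarrow> b = bot)"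

definition Min_i :: "('i \<Rightarrow> 'a::bounded_lattice \<Rightarrow> 'a) \<Rightarrow> 'i \<Rightarrow> 'a set" where
  "Min_i dia i = {a. i_minimal dia i a}"

definition Min_down :: "('i \<Rightarrow> 'a::bounded_lattice \<Rightarrow> 'a) \<Rightarrow> 'i \<Rightarrow> 'a set" where
  "Min_down dia i = {x. \<exists>a\<in>Min_i dia i. x \<le> a}"

text \<open>Partial maps into the nonnegative reals are rendered as maps 'a \<rightharpoonup> real
  together with nonnegativity on the domain.\<close>
definition premeasure :: "('i \<Rightarrow> 'a::bounded_lattice \<Rightarrow> 'a) \<Rightarrow> 'i \<Rightarrow> ('a \<rightharpoonup> real) \<Rightarrow> bool" where
  "premeasure dia i m \<longleftrightarrow>
     dom m = Min_down dia i
     \<and> (\<forall>x\<in>dom m. the (m x) \<ge> 0)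
     \<and> (\<forall>x\<in>dom m. \<forall>y\<in>dom m. x \<le> y \<longrightarrow> the (m x) \<le> the (m y))
     \<and> (\<forall>a\<in>Min_i dia i. \<forall>b c. b \<le> a \<longrightarrow> c \<le> a \<longrightarrow>
           the (m (sup b c)) = the (m b) + the (m c) - the (m (inf b c)))
     \<and> (dom m \<noteq> {} \<longrightarrow> m bot = Some 0)"

definition i_measure :: "('i \<Rightarrow> 'a::bounded_lattice \<Rightarrow> 'a) \<Rightarrow> 'i \<Rightarrow> ('a \<rightharpoonup> real) \<Rightarrow> bool" where
  "i_measure dia i m \<longleftrightarrow> premeasure dia i m
     \<and> (\<forall>a\<in>Min_i dia i. \<forall>b c. b \<le> a \<longrightarrow> c \<le> a \<longrightarrow> b < c \<longrightarrow> the (m b) < the (m c))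
     \<and> (\<forall>a\<in>Min_i dia i. m a = Some 1)"

definition APE_structure ::
  "('a::{finite,bounded_lattice} \<Rightarrow> 'a \<Rightarrow> 'a) \<Rightarrow> ('i \<Rightarrow> 'a \<Rightarrow> 'a) \<Rightarrow> ('i \<Rightarrow> 'a \<Rightarrow> 'a)
   \<Rightarrow> ('i \<Rightarrow> 'a \<rightharpoonup> real) \<Rightarrow> bool" where
  "APE_structure imp dia box mu \<longleftrightarrow> epistemic_HA imp dia box \<and> (\<forall>i. i_measure dia i (mu i))"

text \<open>The pre-ordered multiset \<Phi> is a multiset;
  the copies of an element a are indexed by k < count \<Phi> a, with the linear order of copies
  given by the order of indices. pre a k is the distribution pre(\<bullet> | a_k).\<close>
definition prob_event_structure ::
  "'e set \<Rightarrow> ('i \<Rightarrow> 'e rel) \<Rightarrow> ('i \<Rightarrow> 'e \<Rightarrow> real) \<Rightarrow> 'a::bounded_lattice multiset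
   \<Rightarrow> ('a \<Rightarrow> nat \<Rightarrow> 'e \<Rightarrow> real) \<Rightarrow> bool" where
  "prob_event_structure E sim P Phi pre \<longleftrightarrow>
     finite E \<and> E \<noteq> {}
     \<and> (\<forall>i. equiv E (sim i))
     \<and> (\<forall>i. \<forall>e\<in>E. 0 < P i e \<and> P i e \<le> 1)
     \<and> (\<forall>i. \<forall>e\<in>E. (\<Sum>e'\<in>{e'\<in>E. (e', e) \<in> sim i}. P i e') = 1)
     \<and> (\<forall>a\<in>#Phi. \<forall>b\<in>#Phi. a \<noteq> b \<longrightarrow> inf a b = bot \<or> a < b \<or> b < a)
     \<and> (\<forall>a\<in>#Phi. \<forall>k<count Phi a. (\<forall>e\<in>E. 0 \<le> pre a k e) \<and> (\<Sum>e\<in>E. pre a k e) = 1)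
     \<and> (\<forall>a\<in>#Phi. \<forall>k<count Phi a. \<forall>b\<in>#Phi. \<forall>l<count Phi b. \<forall>e\<in>E.
          pre a k e = 0 \<longrightarrow> (a < b \<or> (a = b \<and> k < l)) \<longrightarrow> pre b l e = 0)"

definition mb :: "'a::order multiset \<Rightarrow> 'a \<Rightarrow> 'a set" where
  "mb Phi a = {b. b \<in># Phi \<and> b < a \<and> \<not> (\<exists>c. c \<in># Phi \<and> c < a \<and> b < c)}"

definition mu_a :: "('i \<Rightarrow> 'a::bounded_lattice \<Rightarrow> 'a) \<Rightarrow> ('i \<Rightarrow> 'a \<rightharpoonup> real) \<Rightarrow> 'a multiset
   \<Rightarrow> 'a \<Rightarrow> 'i \<Rightarrow> 'a \<rightharpoonup> real" where
  "mu_a dia mu Phi a i = (\<lambda>x. if x \<in> Min_down dia i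
      then Some (the (mu i (inf x a)) - (\<Sum>b\<in>mb Phi a. the (mu i (inf x b))))
      else None)"

end

theory Submission
  imports Defs
begin

text \<open>Every Heyting algebra is distributive, so for a fixed element t the map
  x |-> mu(x \<sqinter> t) is again modular below each i-minimal element. The maximal elements
  below a in Phi are pairwise incomparable, hence pairwise disjoint, so by modularity
  their contributions add up to mu(x \<sqinter> B) with B their join; thus
  mu^a(x) = mu(x \<sqinter> a) - mu(x \<sqinter> B) with B \<le> a. For x \<le> y, monotonicity of this
  difference follows from modularity applied to (x \<sqinter> a) \<squnion> (y \<sqinter> B) \<le> y \<sqinter> a.
  Invariance under x |-> x \<sqinter> y for a \<le> y holds because every meet in the definition
  of mu^a is with an element below a.\<close>

lemma heyting_inf_sup_distrib:
  fixes imp :: "'a::bounded_lattice \<Rightarrow> 'a \<Rightarrow> 'a" and c x y :: 'a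
  assumes "heyting imp"
  shows "inf c (sup x y) = sup (inf c x) (inf c y)"
proof (rule order.antisym)
  have residuation: "\<And>a b d. d \<le> imp a b \<longleftrightarrow> inf d a \<le> b"
    using assms unfolding heyting_def by blast
  have "x \<le> imp c (sup (inf c x) (inf c y))" "y \<le> imp c (sup (inf c x) (inf c y))"
    using residuation by (simp_all add: inf_commute le_supI1 le_supI2)
  then have "sup x y \<le> imp c (sup (inf c x) (inf c y))"
    by simp
  then show "inf c (sup x y) \<le> sup (inf c x) (inf c y)"
    using residuation by (simp add: inf_commute)
qed (simp add: le_infI2)

definition join_set :: "'a::bounded_lattice set \<Rightarrow> 'a" where
  "join_set S = Finite_Set.fold sup bot S"

lemma join_set_empty [simp]: "join_set {} = bot"
  by (simp add: join_set_def)

lemma join_set_insert [simp]: "finite S \<Longrightarrow> join_set (insert s S) = sup s (join_set S)"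
  unfolding join_set_def
  by (simp add: comp_fun_idem_on.fold_insert_idem[OF comp_fun_idem_sup[unfolded comp_fun_idem_def']])

lemma join_set_least: "finite S \<Longrightarrow> (\<And>b. b \<in> S \<Longrightarrow> b \<le> w) \<Longrightarrow> join_set S \<le> w"
  by (induction S rule: finite_induct) auto

locale local_valuation =
  fixes M :: "'a::bounded_lattice set" and f :: "'a \<Rightarrow> real"
  assumes inf_sup_distrib: "inf c (sup x y) = sup (inf c x) (inf c y)"
    and modular: "m \<in> M \<Longrightarrow> b \<le> m \<Longrightarrow> c \<le> m \<Longrightarrow> f (sup b c) = f b + f c - f (inf b c)"
    and mono_below: "m \<in> M \<Longrightarrow> y \<le> m \<Longrightarrow> x \<le> y \<Longrightarrow> f x \<le> f y"
    and f_bot: "f bot = 0"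
begin

lemma modular_inf:
  assumes "m \<in> M" "b \<le> m" "c \<le> m"
  shows "f (inf (sup b c) t) = f (inf b t) + f (inf c t) - f (inf (inf b c) t)"
proof -
  have "inf (sup b c) t = sup (inf b t) (inf c t)"
    using inf_sup_distrib by (simp add: inf_commute)
  moreover have "inf (inf b t) (inf c t) = inf (inf b c) t"
    by (simp add: inf_aci)
  moreover have "inf b t \<le> m" "inf c t \<le> m"
    using assms by (meson inf_le1 order_trans)+
  ultimately show ?thesis
    using modular assms(1) by simp
qed

lemma inf_join_set_eq_bot:
  fixes c :: 'a
  shows "finite S \<Longrightarrow> (\<And>b. b \<in> S \<Longrightarrow> inf c b = bot) \<Longrightarrow> inf c (join_set S) = bot"
  by (induction S rule: finite_induct) (simp_all add: inf_sup_distrib)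

lemma sum_disjoint_eq_join_set:
  assumes "finite S" "pairwise (\<lambda>b c. inf b c = bot) S" "m \<in> M" "z \<le> m"
  shows "(\<Sum>b\<in>S. f (inf z b)) = f (inf z (join_set S))"
  using assms(1,2)
proof (induction S rule: finite_induct)
  case empty
  show ?case by (simp add: f_bot)
next
  case (insert s S)
  have "inf s (join_set S) = bot"
    using insert.hyps insert.prems by (intro inf_join_set_eq_bot) (auto simp: pairwise_def)
  then have disjoint: "inf (inf z s) (inf z (join_set S)) = bot"
    by (metis inf_bot_right inf_commute inf_left_commute)
  have "(\<Sum>b\<in>insert s S. f (inf z b)) = f (inf z s) + f (inf z (join_set S))"
    using insert by (simp add: pairwise_insert)
  also have "\<dots> = f (sup (inf z s) (inf z (join_set S)))"
    using modular[OF assms(3), of "inf z s" "inf z (join_set S)"] assms(4) disjoint f_bot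
    by (simp add: le_infI1)
  also have "sup (inf z s) (inf z (join_set S)) = inf z (join_set (insert s S))"
    using insert.hyps by (simp add: inf_sup_distrib)
  finally show ?case .
qed

lemma diff_inf_mono:
  assumes "B \<le> a" "m \<in> M" "y \<le> m" "x \<le> y"
  shows "f (inf x a) - f (inf x B) \<le> f (inf y a) - f (inf y B)"
proof -
  define w where "w = sup (inf x a) (inf y B)"
  have "inf (inf x a) (inf y B) = inf x B"
    using assms(1,4) by (metis inf.absorb1 inf.absorb2 inf.assoc inf_left_commute)
  moreover have "inf x a \<le> m" "inf y B \<le> m"
    using assms(3,4) by (meson inf_le1 order_trans)+
  ultimately have "f w = f (inf x a) + f (inf y B) - f (inf x B)"
    unfolding w_def using modular assms(2) by simp
  moreover have "w \<le> inf y a"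
    unfolding w_def using assms(1,4) by (meson inf_mono le_sup_iff order_refl)
  then have "f w \<le> f (inf y a)"
    using mono_below assms(2,3) by (meson inf_le1 order_trans)
  ultimately show ?thesis by simp
qed

end

lemma Min_down_inf: "x \<in> Min_down dia i \<Longrightarrow> inf x y \<in> Min_down dia i"
  unfolding Min_down_def by (auto intro: le_infI1)

lemma
  assumes "premeasure dia i m"
  shows premeasure_dom: "dom m = Min_down dia i"
    and premeasure_mono: "x \<in> dom m \<Longrightarrow> y \<in> dom m \<Longrightarrow> x \<le> y \<Longrightarrow> the (m x) \<le> the (m y)"
    and premeasure_modular: "M \<in> Min_i dia i \<Longrightarrow> b \<le> M \<Longrightarrow> c \<le> M \<Longrightarrow>
      the (m (sup b c)) = the (m b) + the (m c) - the (m (inf b c))"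
    and premeasure_bot: "dom m \<noteq> {} \<Longrightarrow> m bot = Some 0"
  using assms by (simp_all add: premeasure_def)

lemma local_valuation_premeasure:
  fixes imp :: "'a::bounded_lattice \<Rightarrow> 'a \<Rightarrow> 'a" and m :: "'a \<rightharpoonup> real"
  assumes "heyting imp" "premeasure dia i m" "Min_i dia i \<noteq> {}"
  shows "local_valuation (Min_i dia i) (\<lambda>x. the (m x))"
proof
  show "inf c (sup x y) = sup (inf c x) (inf c y)" for c x y :: 'a
    using heyting_inf_sup_distrib[OF assms(1)] .
  show "the (m (sup b c)) = the (m b) + the (m c) - the (m (inf b c))"
    if "M \<in> Min_i dia i" "b \<le> M" "c \<le> M" for M b c
    using premeasure_modular[OF assms(2) that] .
  show "the (m x) \<le> the (m y)" if "M \<in> Min_i dia i" "y \<le> M" "x \<le> y" for M x y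
  proof (rule premeasure_mono[OF assms(2) _ _ that(3)])
    show "x \<in> dom m" "y \<in> dom m"
      using that order_trans unfolding premeasure_dom[OF assms(2)] Min_down_def by blast+
  qed
  have "dom m \<noteq> {}"
    using assms(3) unfolding premeasure_dom[OF assms(2)] Min_down_def by auto
  then show "the (m bot) = 0"
    using premeasure_bot[OF assms(2)] by simp
qed

lemma premeasure_diff_inf:
  fixes imp :: "'a::bounded_lattice \<Rightarrow> 'a \<Rightarrow> 'a" and m :: "'a \<rightharpoonup> real"
  assumes "heyting imp" "premeasure dia i m" "B \<le> a"
  shows "premeasure dia i (\<lambda>x. if x \<in> Min_down dia i
    then Some (the (m (inf x a)) - the (m (inf x B))) else None)"
    (is "premeasure dia i ?n")
proof (cases "Min_i dia i = {}")
  case True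
  then show ?thesis
    by (simp add: premeasure_def Min_down_def dom_def)
next
  case False
  interpret local_valuation "Min_i dia i" "\<lambda>x. the (m x)"
    using local_valuation_premeasure[OF assms(1,2) False] .
  have dom: "dom ?n = Min_down dia i"
    by (auto simp: dom_def)
  have mono: "the (?n x) \<le> the (?n y)" if "y \<in> Min_down dia i" "x \<le> y" for x y
    using that diff_inf_mono[OF assms(3)] Min_down_inf[of y dia i x]
    by (auto simp: Min_down_def inf.absorb1)
  have bot: "bot \<in> Min_down dia i"
    using False unfolding Min_down_def by auto
  show ?thesis
    unfolding premeasure_def dom
  proof (intro conjI ballI allI impI)
    show "0 \<le> the (?n x)" if "x \<in> Min_down dia i" for x
      using mono[OF that bot_least] bot f_bot by simp
    show "the (?n x) \<le> the (?n y)" if "y \<in> Min_down dia i" "x \<le> y" for x y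
      using mono that .
    show "the (?n (sup b c)) = the (?n b) + the (?n c) - the (?n (inf b c))"
      if "M' \<in> Min_i dia i" "b \<le> M'" "c \<le> M'" for M' b c
    proof -
      have "sup b c \<in> Min_down dia i" "inf b c \<in> Min_down dia i"
        "b \<in> Min_down dia i" "c \<in> Min_down dia i"
        using that unfolding Min_down_def by (auto intro: le_infI1)
      then show ?thesis
        using modular_inf[OF that] by simp
    qed
    show "?n bot = Some 0"
      using bot f_bot by simp
  qed simp
qed

lemma mb_pairwise_disjoint:
  assumes "\<forall>a\<in>#Phi. \<forall>b\<in>#Phi. a \<noteq> b \<longrightarrow> inf a b = bot \<or> a < b \<or> b < a"
  shows "pairwise (\<lambda>b c. inf b c = bot) (mb Phi a)"
  using assms unfolding pairwise_def mb_def by blast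

lemma finite_mb: "finite (mb Phi a)"
  unfolding mb_def by (rule finite_subset[of _ "set_mset Phi"]) auto

lemma join_set_mb_le: "join_set (mb Phi a) \<le> a"
  using finite_mb by (rule join_set_least) (simp add: mb_def less_imp_le)

lemma mu_a_eq_diff_join:
  fixes imp :: "'a::bounded_lattice \<Rightarrow> 'a \<Rightarrow> 'a" and mu :: "'i \<Rightarrow> 'a \<rightharpoonup> real"
  assumes "heyting imp" "premeasure dia i (mu i)"
    and "\<forall>a\<in>#Phi. \<forall>b\<in>#Phi. a \<noteq> b \<longrightarrow> inf a b = bot \<or> a < b \<or> b < a"
  shows "mu_a dia mu Phi a i = (\<lambda>x. if x \<in> Min_down dia i
    then Some (the (mu i (inf x a)) - the (mu i (inf x (join_set (mb Phi a))))) else None)"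
proof
  fix x
  show "mu_a dia mu Phi a i x = (if x \<in> Min_down dia i
    then Some (the (mu i (inf x a)) - the (mu i (inf x (join_set (mb Phi a))))) else None)"
  proof (cases "x \<in> Min_down dia i")
    case True
    then obtain m where m: "m \<in> Min_i dia i" "x \<le> m"
      unfolding Min_down_def by blast
    then interpret local_valuation "Min_i dia i" "\<lambda>x. the (mu i x)"
      using local_valuation_premeasure[OF assms(1,2)] by blast
    show ?thesis
      using True sum_disjoint_eq_join_set[OF finite_mb mb_pairwise_disjoint[OF assms(3)] m]
      by (simp add: mu_a_def)
  qed (simp add: mu_a_def)
qed

lemma dom_mu_a: "dom (mu_a dia mu Phi a i) = Min_down dia i"
  by (auto simp: mu_a_def dom_def)

lemma mu_a_inf_upper:
  assumes "x \<in> Min_down dia i" "a \<le> y"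
  shows "mu_a dia mu Phi a i x = mu_a dia mu Phi a i (inf x y)"
proof -
  have "inf (inf x y) b = inf x b" if "b \<le> a" for b
    using that assms(2) by (metis inf.absorb2 inf.assoc)
  moreover have "\<And>b. b \<in> mb Phi a \<Longrightarrow> b \<le> a"
    by (simp add: mb_def less_imp_le)
  ultimately show ?thesis
    using assms(1) Min_down_inf[OF assms(1)] by (simp add: mu_a_def)
qed

theorem proposition5:
  fixes imp :: "'a::{finite,bounded_lattice} \<Rightarrow> 'a \<Rightarrow> 'a"
    and dia box :: "'i \<Rightarrow> 'a \<Rightarrow> 'a"
    and mu :: "'i \<Rightarrow> 'a \<rightharpoonup> real"
    and E :: "'e set" and sim :: "'i \<Rightarrow> 'e rel" and P :: "'i \<Rightarrow> 'e \<Rightarrow> real"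
    and Phi :: "'a multiset" and pre :: "'a \<Rightarrow> nat \<Rightarrow> 'e \<Rightarrow> real"
  assumes "APE_structure imp dia box mu"
    and "prob_event_structure E sim P Phi pre"
    and "a \<in># Phi"
  shows "premeasure dia i (mu_a dia mu Phi a i)
    \<and> (\<forall>x y. x \<in> dom (mu_a dia mu Phi a i) \<longrightarrow> a \<le> y \<longrightarrow>
          mu_a dia mu Phi a i x = mu_a dia mu Phi a i (inf x y))"
proof
  have heyting: "heyting imp"
    using assms(1) unfolding APE_structure_def epistemic_HA_def monadic_HA_def by blast
  have premeasure: "premeasure dia i (mu i)"
    using assms(1) unfolding APE_structure_def i_measure_def by blast
  have comparable: "\<forall>a\<in>#Phi. \<forall>b\<in>#Phi. a \<noteq> b \<longrightarrow> inf a b = bot \<or> a < b \<or> b < a"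
    using assms(2) unfolding prob_event_structure_def by blast
  show "premeasure dia i (mu_a dia mu Phi a i)"
    unfolding mu_a_eq_diff_join[where mu = mu and i = i, OF heyting premeasure comparable]
    using premeasure_diff_inf[OF heyting premeasure join_set_mb_le] .
  show "\<forall>x y. x \<in> dom (mu_a dia mu Phi a i) \<longrightarrow> a \<le> y \<longrightarrow>
      mu_a dia mu Phi a i x = mu_a dia mu Phi a i (inf x y)"
    by (simp add: dom_mu_a mu_a_inf_upper)
qed

end
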